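(* Fix a positive integer $N$ and nonzero real constants $W_S,W_T$. The map $\Gamma:(T^*D\times\mathbb{R}^2)^N\to\mathfrak p^*$, $$(\bm q^i,\bm p^i,S^{*i}_0,T^{*i}_0)_{i=1}^N\mapsto\Big(\sum_{i=1}^N\bm p^i\otimes\delta(\bm x-\bm q^i)\,dx\wedge dy,\ W_S\sum_{i=1}^NS^{*i}_0\,\delta(\bm x-\bm q^i)\,dx\wedge dy,\ W_T\sum_{i=1}^NT^{*i}_0\,\delta(\bm x-\bm q^i)\,dx\wedge dy\Big)$$ is a Poisson map, where $T^*D\times\mathbb{R}^2$ is the product of the canonical symplectic manifold $T^*D$ with the trivial Poisson manifold $\mathbb{R}^2$ (and $(T^*D\times\mathbb{R}^2)^N$ has the product structure), and $\mathfrak p^*$ carries its Lie–Poisson structure.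
   Context: $D$ is the closed unit disc with coordinates $(x,y)$, $\bm x=(x,y)$. Lie algebra $\mathfrak p$: triples $X=(\bm U,S,T)$ with $S,T$ smooth functions on $D$ and $\bm U$ a vector field on $D$ with $xU^x+yU^y=0$ on $\partial D$; bracket $[X_1,X_2]=-([\bm U_1,\bm U_2],\mathcal L_{\bm U_1}S_2-\mathcal L_{\bm U_2}S_1,\mathcal L_{\bm U_1}T_2-\mathcal L_{\bm U_2}T_1)$. Dual $\mathfrak p^*$: triples $X^*=(\bm U^*,S^*,T^* )$ with $S^*=\sigma\,dx\wedge dy$, $T^*=\tau\,dx\wedge dy$ distributional 2-forms and $\bm U^*=(U_xdx+U_ydy)\otimes(dx\wedge dy)$ a distributional 1-form density (with tangential boundary condition $xU_x+yU_y=0$ on $\partial D$); pairing $\langle X^*,X\rangle=\int_D(U_iU^i+\sigma S+\tau T)\,dx\,dy$; functional derivative $\delta F/\delta X^*\in\mathfrak p$ defined by $\frac{d}{d\lambda}|_0F(X^*+\lambda\delta X^* )=\langle\delta X^*,\delta F/\delta X^*\rangle$; Lie–Poisson bracket $\{F,G\}(X^* )=\langle X^*,[\delta F/\delta X^*,\delta G/\delta X^*]\rangle$. On $T^*D\times\mathbb{R}^2\ni(\bm q,\bm p,S_0^*,T_0^* )$ the bracket is $\{f,g\}=\partial_{\bm q}f\cdot\partial_{\bm p}g-\partial_{\bm q}g\cdot\partial_{\bm p}f$; for $\bm q\in\partial D$, momentum is defined modulo vectors normal to $\partial D$. *)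

theory Defs
  imports "HOL-Analysis.Analysis"
begin

type_synonym pt = "real^2"

definition D :: "pt set" where "D = cball 0 1"

definition pdiff :: "2 \<Rightarrow> (pt \<Rightarrow> real) \<Rightarrow> pt \<Rightarrow> real" where
  "pdiff i f x = frechet_derivative f (at x) (axis i 1)"

definition smooth_on :: "pt set \<Rightarrow> (pt \<Rightarrow> real) \<Rightarrow> bool" where
  "smooth_on S f \<longleftrightarrow> (\<forall>is. (fold pdiff is f) differentiable_on S)"

definition smooth_D :: "(pt \<Rightarrow> real) \<Rightarrow> bool" where
  "smooth_D f \<longleftrightarrow> (\<exists>S g. open S \<and> D \<subseteq> S \<and> smooth_on S g \<and> (\<forall>x\<in>D. f x = g x))
                  \<and> (\<forall>x. x \<notin> D \<longrightarrow> f x = 0)"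

type_synonym pelem = "(pt \<Rightarrow> pt) \<times> (pt \<Rightarrow> real) \<times> (pt \<Rightarrow> real)"

definition in_p :: "pelem \<Rightarrow> bool" where
  "in_p X = (case X of (U, S, T) \<Rightarrow>
     (\<forall>j. smooth_D (\<lambda>x. U x $ j)) \<and> smooth_D S \<and> smooth_D T \<and>
     (\<forall>x. norm x = 1 \<longrightarrow> x \<bullet> U x = 0))"

text \<open>Derivative on D (within D, so meaningful up to the boundary).\<close>
definition dD :: "(pt \<Rightarrow> 'b::real_normed_vector) \<Rightarrow> pt \<Rightarrow> pt \<Rightarrow> 'b" where
  "dD f x v = frechet_derivative f (at x within D) v"

definition vbr :: "(pt \<Rightarrow> pt) \<Rightarrow> (pt \<Rightarrow> pt) \<Rightarrow> pt \<Rightarrow> pt" where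
  "vbr U1 U2 x = dD U2 x (U1 x) - dD U1 x (U2 x)"

definition lieD :: "(pt \<Rightarrow> pt) \<Rightarrow> (pt \<Rightarrow> real) \<Rightarrow> pt \<Rightarrow> real" where
  "lieD U S x = dD S x (U x)"

definition pbr :: "pelem \<Rightarrow> pelem \<Rightarrow> pelem" where
  "pbr X1 X2 = (case X1 of (U1, S1, T1) \<Rightarrow> case X2 of (U2, S2, T2) \<Rightarrow>
     ((\<lambda>x. if x \<in> D then - vbr U1 U2 x else 0),
      (\<lambda>x. if x \<in> D then - (lieD U1 S2 x - lieD U2 S1 x) else 0),
      (\<lambda>x. if x \<in> D then - (lieD U1 T2 x - lieD U2 T1 x) else 0)))"

definition plin :: "real \<Rightarrow> pelem \<Rightarrow> real \<Rightarrow> pelem \<Rightarrow> pelem" where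
  "plin a X b Y = (case X of (U1, S1, T1) \<Rightarrow> case Y of (U2, S2, T2) \<Rightarrow>
     ((\<lambda>x. a *\<^sub>R U1 x + b *\<^sub>R U2 x), (\<lambda>x. a * S1 x + b * S2 x), (\<lambda>x. a * T1 x + b * T2 x)))"

type_synonym pstar = "pelem \<Rightarrow> real"

definition in_pstar :: "pstar \<Rightarrow> bool" where
  "in_pstar Xs \<longleftrightarrow>
     (\<forall>X Y a b. in_p X \<longrightarrow> in_p Y \<longrightarrow> Xs (plin a X b Y) = a * Xs X + b * Xs Y) \<and>
     (\<forall>X. \<not> in_p X \<longrightarrow> Xs X = 0)"

definition wcurve :: "real set \<Rightarrow> (real \<Rightarrow> pstar) \<Rightarrow> (real \<Rightarrow> pstar) \<Rightarrow> bool" where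
  "wcurve I c c' \<longleftrightarrow> (\<forall>\<mu>\<in>I. in_pstar (c \<mu>) \<and> in_pstar (c' \<mu>)) \<and>
     (\<forall>\<mu>\<in>I. \<forall>X. in_p X \<longrightarrow> ((\<lambda>\<nu>. c \<nu> X) has_real_derivative c' \<mu> X) (at \<mu> within I))"

definition has_fderiv :: "(pstar \<Rightarrow> real) \<Rightarrow> (pstar \<Rightarrow> pelem) \<Rightarrow> bool" where
  "has_fderiv F dF \<longleftrightarrow> (\<forall>Xs. in_pstar Xs \<longrightarrow> in_p (dF Xs)) \<and>
     (\<forall>I c c' \<mu>. wcurve I c c' \<longrightarrow> \<mu> \<in> I \<longrightarrow>
        ((\<lambda>\<nu>. F (c \<nu>)) has_real_derivative c' \<mu> (dF (c \<mu>))) (at \<mu> within I))"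

definition lp_br :: "(pstar \<Rightarrow> pelem) \<Rightarrow> (pstar \<Rightarrow> pelem) \<Rightarrow> pstar \<Rightarrow> real" where
  "lp_br dF dG Xs = Xs (pbr (dF Xs) (dG Xs))"

definition Gamma :: "nat \<Rightarrow> real \<Rightarrow> real \<Rightarrow> (nat \<Rightarrow> pt) \<Rightarrow> (nat \<Rightarrow> pt) \<Rightarrow> (nat \<Rightarrow> real)
    \<Rightarrow> (nat \<Rightarrow> real) \<Rightarrow> pstar" where
  "Gamma N WS WT q p s t = (\<lambda>X. if in_p X then (case X of (U, S, T) \<Rightarrow>
      (\<Sum>i<N. p i \<bullet> U (q i) + WS * s i * S (q i) + WT * t i * T (q i))) else 0)"

type_synonym phasefun = "(nat \<Rightarrow> pt) \<Rightarrow> (nat \<Rightarrow> pt) \<Rightarrow> (nat \<Rightarrow> real) \<Rightarrow> (nat \<Rightarrow> real) \<Rightarrow> real"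

definition grad_q :: "phasefun \<Rightarrow> nat \<Rightarrow> (nat \<Rightarrow> pt) \<Rightarrow> (nat \<Rightarrow> pt) \<Rightarrow> (nat \<Rightarrow> real)
    \<Rightarrow> (nat \<Rightarrow> real) \<Rightarrow> pt" where
  "grad_q f i q p s t =
     (\<chi> j. frechet_derivative (\<lambda>v. f (q(i := v)) p s t) (at (q i) within D) (axis j 1))"

definition grad_p :: "phasefun \<Rightarrow> nat \<Rightarrow> (nat \<Rightarrow> pt) \<Rightarrow> (nat \<Rightarrow> pt) \<Rightarrow> (nat \<Rightarrow> real)
    \<Rightarrow> (nat \<Rightarrow> real) \<Rightarrow> pt" where
  "grad_p f i q p s t =
     (\<chi> j. frechet_derivative (\<lambda>v. f q (p(i := v)) s t) (at (p i)) (axis j 1))"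

text \<open>Canonical bracket on (T*D)^N times the trivial bracket on (R^2)^N.\<close>
definition phase_br :: "nat \<Rightarrow> phasefun \<Rightarrow> phasefun \<Rightarrow> (nat \<Rightarrow> pt) \<Rightarrow> (nat \<Rightarrow> pt)
    \<Rightarrow> (nat \<Rightarrow> real) \<Rightarrow> (nat \<Rightarrow> real) \<Rightarrow> real" where
  "phase_br N f g q p s t = (\<Sum>i<N. grad_q f i q p s t \<bullet> grad_p g i q p s t
                                  - grad_q g i q p s t \<bullet> grad_p f i q p s t)"

definition phase_diff :: "nat \<Rightarrow> phasefun \<Rightarrow> (nat \<Rightarrow> pt) \<Rightarrow> (nat \<Rightarrow> pt)
    \<Rightarrow> (nat \<Rightarrow> real) \<Rightarrow> (nat \<Rightarrow> real) \<Rightarrow> bool" where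
  "phase_diff N f q p s t \<longleftrightarrow> (\<forall>i<N.
     (\<lambda>v. f (q(i := v)) p s t) differentiable (at (q i) within D) \<and>
     (\<lambda>v. f q (p(i := v)) s t) differentiable (at (p i)))"

end

theory Submission
  imports Defs
begin

text \<open>Write \<open>X\<^sub>0 = \<Gamma>(q, p, S\<^sub>0, T\<^sub>0)\<close> and \<open>\<delta>F/\<delta>X\<^sup>* (X\<^sub>0) = (U\<^sub>F, S\<^sub>F, T\<^sub>F)\<close>.
  By a chain rule for functional derivatives, the \<open>p\<^sub>i\<close>-gradient of \<open>F \<circ> \<Gamma>\<close> is
  \<open>U\<^sub>F(q\<^sub>i)\<close> and its \<open>q\<^sub>i\<close>-derivative in direction \<open>w\<close> is
  \<open>p\<^sub>i \<cdot> DU\<^sub>F(q\<^sub>i) w + W\<^sub>S S\<^sub>0\<^sup>i DS\<^sub>F(q\<^sub>i) w + W\<^sub>T T\<^sub>0\<^sup>i DT\<^sub>F(q\<^sub>i) w\<close>.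
  Inserting these into the canonical bracket and summing over the particles gives exactly the
  pairing of \<open>X\<^sub>0\<close> with \<open>[\<delta>F/\<delta>X\<^sup>*, \<delta>G/\<delta>X\<^sup>*]\<close>, because every component of the bracket of
  \<open>\<pp>\<close> is a difference of derivatives of one element along the vector field of the other.

  Two points need work. Functional derivatives are only tested along curves in \<open>\<pp>\<^sup>*\<close>, so the
  chain rule is proved by contradiction from a bad sequence of base points, which is turned into
  a curve on a parameter set whose nonzero points are isolated. And the pairing with the bracket
  is only meaningful if \<open>\<pp>\<close> is closed under the bracket: the Lie derivatives stay smooth up to
  the boundary, and tangency at \<open>\<partial>D\<close> is preserved because differentiating \<open>x \<cdot> U(x) = 0\<close> along
  the unit circle makes the normal parts of \<open>DU\<^sub>2 U\<^sub>1\<close> and \<open>DU\<^sub>1 U\<^sub>2\<close> cancel.\<close>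

section \<open>Smooth functions on open sets\<close>

lemma pdiff_cong:
  assumes "open S" "x \<in> S" "\<And>y. y \<in> S \<Longrightarrow> f y = g y"
  shows "pdiff i f x = pdiff i g x"
proof -
  have "(f has_derivative L) (at x) \<longleftrightarrow> (g has_derivative L) (at x)" for L
    using has_derivative_transform_within_open[of f L x UNIV S g]
      has_derivative_transform_within_open[of g L x UNIV S f] assms by auto
  then show ?thesis unfolding pdiff_def frechet_derivative_def by simp
qed

lemma fold_pdiff_cong:
  assumes "open S" "\<And>y. y \<in> S \<Longrightarrow> f y = g y" "x \<in> S"
  shows "fold pdiff is f x = fold pdiff is g x"
  using assms(2,3)
proof (induction "is" arbitrary: f g x)
  case (Cons i "is")
  have "pdiff i f y = pdiff i g y" if "y \<in> S" for y
    using pdiff_cong[OF assms(1) that Cons.prems(1)] .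
  with Cons.IH[of "pdiff i f" "pdiff i g"] Cons.prems(2) show ?case by simp
qed simp

lemma differentiable_on_cong_open:
  assumes "open S" "\<And>y. y \<in> S \<Longrightarrow> f y = g y" "g differentiable_on S"
  shows "f differentiable_on S"
  using assms unfolding differentiable_on_eq_differentiable_at[OF assms(1)] differentiable_def
  by (metis has_derivative_transform_within_open)

lemma smooth_on_coinduct:
  assumes "P f" and S: "open S"
    and differentiable: "\<And>f. P f \<Longrightarrow> f differentiable_on S"
    and pdiff_closed: "\<And>f i. P f \<Longrightarrow> \<exists>h. P h \<and> (\<forall>x\<in>S. pdiff i f x = h x)"
  shows "smooth_on S f"
proof -
  have *: "\<exists>h. P h \<and> (\<forall>x\<in>S. fold pdiff is f x = h x)" if "P f" for "is" f
    using that
  proof (induction "is" arbitrary: f)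
    case Nil
    then show ?case by (intro exI[of _ f]) simp
  next
    case (Cons i "is")
    obtain h1 where h1: "P h1" "\<forall>x\<in>S. pdiff i f x = h1 x"
      using pdiff_closed[OF Cons.prems] by blast
    obtain h where h: "P h" "\<forall>x\<in>S. fold pdiff is h1 x = h x"
      using Cons.IH[OF h1(1)] by blast
    have "fold pdiff is (pdiff i f) x = fold pdiff is h1 x" if "x \<in> S" for x
      by (rule fold_pdiff_cong[OF S _ that]) (use h1(2) in simp)
    with h(2) have "\<forall>x\<in>S. fold pdiff (i # is) f x = h x" by simp
    with h(1) show ?case by blast
  qed
  show ?thesis
    unfolding smooth_on_def
  proof
    fix "is"
    obtain h where "P h" "\<forall>x\<in>S. fold pdiff is f x = h x"
      using * assms(1) by blast
    then show "fold pdiff is f differentiable_on S"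
      using differentiable differentiable_on_cong_open[OF S] by blast
  qed
qed

lemma smooth_on_pdiff: "smooth_on S f \<Longrightarrow> smooth_on S (pdiff i f)"
  unfolding smooth_on_def by (metis fold_Cons comp_apply)

lemma smooth_on_subset: "smooth_on S f \<Longrightarrow> T \<subseteq> S \<Longrightarrow> smooth_on T f"
  unfolding smooth_on_def using differentiable_on_subset by blast

lemma smooth_on_has_derivative:
  assumes "smooth_on S f" "open S" "x \<in> S"
  shows "(f has_derivative frechet_derivative f (at x)) (at x)"
proof -
  have "f differentiable_on S"
    using assms(1) unfolding smooth_on_def by (metis fold_Nil id_apply)
  then show ?thesis
    using assms(2,3) frechet_derivative_works differentiable_on_eq_differentiable_at by blast
qed

lemma pdiff_eq: "(f has_derivative f') (at x) \<Longrightarrow> pdiff i f x = f' (axis i 1)"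
  unfolding pdiff_def using frechet_derivative_at by metis

text \<open>The invariant for the coinduction showing that products of smooth functions are smooth:
  by the product rule, finite sums of products are closed under partial differentiation.\<close>

definition sum_of_products_on :: "pt set \<Rightarrow> (pt \<Rightarrow> real) \<Rightarrow> bool" where
  "sum_of_products_on S f \<longleftrightarrow> (\<exists>L. (\<forall>(g, h)\<in>set L. smooth_on S g \<and> smooth_on S h) \<and>
      (\<forall>x\<in>S. f x = (\<Sum>(g, h)\<leftarrow>L. g x * h x)))"

lemma has_derivative_sum_of_products:
  assumes "open S" "x \<in> S" "\<forall>(g, h)\<in>set L. smooth_on S g \<and> smooth_on S h"
  shows "((\<lambda>y. \<Sum>(g, h)\<leftarrow>L. g y * h y) has_derivative
     (\<lambda>v. \<Sum>(g, h)\<leftarrow>L. g x * frechet_derivative h (at x) v + frechet_derivative g (at x) v * h x))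
     (at x)"
  using assms(3)
proof (induction L)
  case (Cons gh L)
  obtain g h where gh: "gh = (g, h)" by force
  have "smooth_on S g" "smooth_on S h" using Cons.prems gh by auto
  note g = smooth_on_has_derivative[OF this(1) assms(1,2)]
    and h = smooth_on_has_derivative[OF this(2) assms(1,2)]
  from has_derivative_add[OF has_derivative_mult[OF g h] Cons.IH] Cons.prems
  show ?case by (simp add: gh)
qed simp

lemma smooth_on_sum_of_products:
  assumes "sum_of_products_on S f" "open S"
  shows "smooth_on S f"
proof (rule smooth_on_coinduct[of "sum_of_products_on S", OF assms])
  fix f assume "sum_of_products_on S f"
  then obtain L where L: "\<forall>(g, h)\<in>set L. smooth_on S g \<and> smooth_on S h"
     "\<forall>x\<in>S. f x = (\<Sum>(g, h)\<leftarrow>L. g x * h x)" unfolding sum_of_products_on_def by blast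
  have "(\<lambda>y. \<Sum>(g, h)\<leftarrow>L. g y * h y) differentiable_on S"
    unfolding differentiable_on_eq_differentiable_at[OF assms(2)]
    using differentiableI[OF has_derivative_sum_of_products[OF assms(2) _ L(1)]] by blast
  then show "f differentiable_on S"
    by (rule differentiable_on_cong_open[OF assms(2), rotated]) (use L(2) in simp)
next
  fix f i assume "sum_of_products_on S f"
  then obtain L where L: "\<forall>(g, h)\<in>set L. smooth_on S g \<and> smooth_on S h"
     "\<forall>x\<in>S. f x = (\<Sum>(g, h)\<leftarrow>L. g x * h x)" unfolding sum_of_products_on_def by blast
  define L' where "L' = map (\<lambda>(g, h). (g, pdiff i h)) L @ map (\<lambda>(g, h). (pdiff i g, h)) L"
  define h where "h x = (\<Sum>(g, h)\<leftarrow>L'. g x * h x)" for x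
  have "sum_of_products_on S h" unfolding sum_of_products_on_def h_def
    using L(1) smooth_on_pdiff by (intro exI[of _ L']) (auto simp: L'_def)
  moreover have "pdiff i f x = h x" if x: "x \<in> S" for x
  proof -
    have "pdiff i f x = pdiff i (\<lambda>y. \<Sum>(g, h)\<leftarrow>L. g y * h y) x"
      by (rule pdiff_cong[OF assms(2) x]) (use L(2) in simp)
    also have "\<dots> = (\<Sum>(g, h)\<leftarrow>L. g x * pdiff i h x + pdiff i g x * h x)"
      using pdiff_eq[OF has_derivative_sum_of_products[OF assms(2) x L(1)]] unfolding pdiff_def
      by (simp add: case_prod_unfold)
    also have "\<dots> = h x"
      unfolding h_def L'_def by (simp add: sum_list_addf case_prod_unfold comp_def)
    finally show ?thesis .
  qed
  ultimately show "\<exists>h. sum_of_products_on S h \<and> (\<forall>x\<in>S. pdiff i f x = h x)" by blast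
qed

lemma smooth_on_const: "smooth_on S (\<lambda>x. c)"
proof -
  have "fold pdiff is (\<lambda>x. c) = (\<lambda>x. if is = [] then c else 0)" for "is"
  proof (induction "is" arbitrary: c)
    case (Cons i "is")
    have "pdiff i (\<lambda>x. c) = (\<lambda>x. 0)" unfolding pdiff_def by simp
    then show ?case using Cons.IH[of 0] by simp
  qed simp
  then show ?thesis unfolding smooth_on_def by simp
qed

lemma smooth_on_mult:
  "open S \<Longrightarrow> smooth_on S f \<Longrightarrow> smooth_on S g \<Longrightarrow> smooth_on S (\<lambda>x. f x * g x)"
  by (rule smooth_on_sum_of_products)
    (auto simp: sum_of_products_on_def intro!: exI[of _ "[(f, g)]"])

lemma smooth_on_add:
  "open S \<Longrightarrow> smooth_on S f \<Longrightarrow> smooth_on S g \<Longrightarrow> smooth_on S (\<lambda>x. f x + g x)"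
  by (rule smooth_on_sum_of_products)
    (auto simp: sum_of_products_on_def smooth_on_const intro!: exI[of _ "[(f, \<lambda>x. 1), (g, \<lambda>x. 1)]"])

lemma smooth_on_sum:
  assumes "open S" "\<And>k. k \<in> K \<Longrightarrow> smooth_on S (f k)"
  shows "smooth_on S (\<lambda>x. \<Sum>k\<in>K. f k x)"
proof (cases "finite K")
  case True
  then show ?thesis
    using assms(2) by (induction K rule: finite_induct) (auto simp: smooth_on_const smooth_on_add assms(1))
qed (simp add: smooth_on_const)

section \<open>Derivatives within the closed disc\<close>

lemma has_derivative_unique_convex_direction:
  fixes f :: "'a::euclidean_space \<Rightarrow> 'b::real_normed_vector"
  assumes "convex S" "x \<in> S" "z \<in> S"
    and A: "(f has_derivative A) (at x within S)" and B: "(f has_derivative B) (at x within S)"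
  shows "A (z - x) = B (z - x)"
proof -
  define \<gamma> where "\<gamma> d = x + d *\<^sub>R (z - x)" for d :: real
  have sub: "\<gamma> ` {0..1} \<subseteq> S"
  proof
    fix y assume "y \<in> \<gamma> ` {0..1}"
    then obtain d where d: "d \<in> {0..1}" "y = (1 - d) *\<^sub>R x + d *\<^sub>R z"
      by (auto simp: \<gamma>_def algebra_simps)
    then show "y \<in> S" using assms(1-3) by (auto intro: convexD)
  qed
  have \<gamma>: "(\<gamma> has_derivative (\<lambda>d. d *\<^sub>R (z - x))) (at 0 within {0..1})"
    unfolding \<gamma>_def by (auto intro!: derivative_eq_intros)
  have "\<gamma> 0 = x" by (simp add: \<gamma>_def)
  have "((f \<circ> \<gamma>) has_derivative A \<circ> (\<lambda>d. d *\<^sub>R (z - x))) (at 0 within {0..1})"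
    by (rule diff_chain_within[OF \<gamma>]) (use has_derivative_subset[OF A sub] \<open>\<gamma> 0 = x\<close> in simp)
  moreover have "((f \<circ> \<gamma>) has_derivative B \<circ> (\<lambda>d. d *\<^sub>R (z - x))) (at 0 within {0..1})"
    by (rule diff_chain_within[OF \<gamma>]) (use has_derivative_subset[OF B sub] \<open>\<gamma> 0 = x\<close> in simp)
  ultimately have "A \<circ> (\<lambda>d. d *\<^sub>R (z - x)) = B \<circ> (\<lambda>d. d *\<^sub>R (z - x))"
    using frechet_derivative_unique_within_closed_interval[of "0::real" 1 0]
    by (simp add: cbox_interval)
  from fun_cong[OF this, of 1] show ?thesis by simp
qed

text \<open>Unlike \<open>frechet_derivative_unique_within\<close>, this applies at boundary points of \<open>D\<close>, where
  some coordinate directions leave the disc.\<close>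

lemma has_derivative_unique_convex:
  fixes f :: "'a::euclidean_space \<Rightarrow> 'b::real_normed_vector"
  assumes "convex S" "x \<in> S" "span ((\<lambda>z. z - x) ` S) = UNIV"
    and A: "(f has_derivative A) (at x within S)" and B: "(f has_derivative B) (at x within S)"
  shows "A = B"
proof
  fix v
  show "A v = B v"
  proof (rule linear_eq_on[where B = "(\<lambda>z. z - x) ` S"])
    show "linear A" "linear B" using A B has_derivative_linear by blast+
    show "v \<in> span ((\<lambda>z. z - x) ` S)" using assms(3) by simp
  next
    fix b assume "b \<in> (\<lambda>z. z - x) ` S"
    then show "A b = B b" using has_derivative_unique_convex_direction[OF assms(1,2) _ A B] by blast
  qed
qed

lemma span_translated_D: "x \<in> D \<Longrightarrow> span ((\<lambda>z. z - x) ` D) = UNIV"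
proof -
  assume x: "x \<in> D"
  have "b \<in> span ((\<lambda>z. z - x) ` D)" if "b \<in> Basis" for b :: pt
  proof -
    have "b \<in> D" "0 \<in> D" using that by (auto simp: D_def)
    then have "b - x \<in> span ((\<lambda>z. z - x) ` D)" "0 - x \<in> span ((\<lambda>z. z - x) ` D)"
      by (auto intro: span_base)
    from span_diff[OF this] show ?thesis by simp
  qed
  then have "span Basis \<subseteq> span ((\<lambda>z. z - x) ` D)"
    by (metis span_mono span_span subsetI)
  then show ?thesis by auto
qed

lemma frechet_derivative_within_D:
  assumes "x \<in> D" "(f has_derivative A) (at x within D)"
  shows "frechet_derivative f (at x within D) = A"
proof (rule has_derivative_unique_convex[OF _ assms(1) span_translated_D[OF assms(1)] _ assms(2)])
  show "convex D" by (simp add: D_def)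
  show "(f has_derivative frechet_derivative f (at x within D)) (at x within D)"
    using differentiableI[OF assms(2)] frechet_derivative_works by blast
qed

lemma dD_eq: "x \<in> D \<Longrightarrow> (f has_derivative A) (at x within D) \<Longrightarrow> dD f x = A"
  unfolding dD_def[abs_def] by (simp add: frechet_derivative_within_D)

definition extends_smoothly :: "(pt \<Rightarrow> real) \<Rightarrow> bool" where
  "extends_smoothly f \<longleftrightarrow> (\<exists>S g. open S \<and> D \<subseteq> S \<and> smooth_on S g \<and> (\<forall>x\<in>D. f x = g x))"

lemma smooth_D_iff: "smooth_D f \<longleftrightarrow> extends_smoothly f \<and> (\<forall>x. x \<notin> D \<longrightarrow> f x = 0)"
  unfolding smooth_D_def extends_smoothly_def by blast

lemma has_derivative_smooth_extension:
  assumes "open S" "D \<subseteq> S" "smooth_on S g" "\<forall>y\<in>D. f y = g y" "x \<in> D"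
  shows "(f has_derivative frechet_derivative g (at x)) (at x within D)"
proof -
  have "(g has_derivative frechet_derivative g (at x)) (at x within D)"
    using smooth_on_has_derivative assms has_derivative_at_withinI by blast
  then show ?thesis
    by (rule has_derivative_transform_within[where d=1]) (use assms in auto)
qed

lemma has_derivative_dD:
  assumes "extends_smoothly f" "x \<in> D"
  shows "(f has_derivative dD f x) (at x within D)"
proof -
  obtain S g where "open S" "D \<subseteq> S" "smooth_on S g" "\<forall>y\<in>D. f y = g y"
    using assms(1) unfolding extends_smoothly_def by blast
  from has_derivative_smooth_extension[OF this assms(2)] show ?thesis
    using dD_eq[OF assms(2)] by metis
qed

lemma has_derivative_vec_lambda:
  fixes f :: "'a::real_normed_vector \<Rightarrow> real^'n"
  assumes "\<And>j. ((\<lambda>y. f y $ j) has_derivative (\<lambda>w. f' w $ j)) (at x within S)"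
  shows "(f has_derivative f') (at x within S)"
proof (rule iffD2[OF has_derivative_componentwise_within], intro ballI)
  fix i :: "real^'n" assume "i \<in> Basis"
  then obtain j where "i = axis j 1" using axis_inverse by metis
  then show "((\<lambda>x. f x \<bullet> i) has_derivative (\<lambda>x. f' x \<bullet> i)) (at x within S)"
    using assms by (simp add: inner_axis)
qed

lemma has_derivative_dD_vec:
  assumes "\<And>j. extends_smoothly (\<lambda>y. U y $ j)" "x \<in> D"
  shows "(U has_derivative dD U x) (at x within D)"
    and "dD U x w $ j = dD (\<lambda>y. U y $ j) x w"
proof -
  have "(U has_derivative (\<lambda>w. \<chi> j. dD (\<lambda>y. U y $ j) x w)) (at x within D)"
    by (rule has_derivative_vec_lambda) (use has_derivative_dD[OF assms] in simp)
  moreover from dD_eq[OF assms(2) this] 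
  have "dD U x = (\<lambda>w. \<chi> j. dD (\<lambda>y. U y $ j) x w)" .
  ultimately show "(U has_derivative dD U x) (at x within D)" "dD U x w $ j = dD (\<lambda>y. U y $ j) x w"
    by simp_all
qed

lemma has_derivative_vanishing_on_sphere:
  fixes \<phi> :: "'a::real_inner \<Rightarrow> 'b::real_normed_vector"
  assumes \<phi>: "(\<phi> has_derivative \<phi>') (at x within S)" and "sphere 0 1 \<subseteq> S"
    and vanish: "\<And>y. norm y = 1 \<Longrightarrow> \<phi> y = 0" and x: "norm x = 1" and v: "x \<bullet> v = 0"
  shows "\<phi>' v = 0"
proof (cases "v = 0")
  case True
  then show ?thesis using has_derivative_linear[OF \<phi>] linear_0 by blast
next
  case False
  define w where "w = v /\<^sub>R norm v"
  have "norm w = 1" "x \<bullet> w = 0" using False v by (simp_all add: w_def)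
  define \<gamma> where "\<gamma> \<theta> = cos \<theta> *\<^sub>R x + sin \<theta> *\<^sub>R w" for \<theta>
  have norm_\<gamma>: "norm (\<gamma> \<theta>) = 1" for \<theta>
  proof -
    have "\<gamma> \<theta> \<bullet> \<gamma> \<theta> = (cos \<theta>)\<^sup>2 * (x \<bullet> x) + (sin \<theta>)\<^sup>2 * (w \<bullet> w)"
      using \<open>x \<bullet> w = 0\<close> unfolding \<gamma>_def
      by (simp add: inner_add_left inner_add_right inner_commute power2_eq_square)
    also have "\<dots> = 1"
      using x \<open>norm w = 1\<close> by (simp add: norm_eq_1)
    finally show ?thesis by (simp add: norm_eq_1)
  qed
  have \<gamma>: "(\<gamma> has_derivative (\<lambda>h. h *\<^sub>R w)) (at 0)"
    unfolding \<gamma>_def by (auto intro!: derivative_eq_intros)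
  have "\<gamma> ` UNIV \<subseteq> S" "\<gamma> 0 = x" using norm_\<gamma> assms(2) by (auto simp: \<gamma>_def)
  have "((\<phi> \<circ> \<gamma>) has_derivative \<phi>' \<circ> (\<lambda>h. h *\<^sub>R w)) (at 0)"
    by (rule diff_chain_within[OF \<gamma>])
      (use has_derivative_subset[OF \<phi>] \<open>\<gamma> ` UNIV \<subseteq> S\<close> \<open>\<gamma> 0 = x\<close> in simp)
  moreover have "\<phi> \<circ> \<gamma> = (\<lambda>_. 0)" using vanish norm_\<gamma> by auto
  ultimately have "\<phi>' \<circ> (\<lambda>h. h *\<^sub>R w) = (\<lambda>_. 0)"
    using has_derivative_unique has_derivative_const by metis
  from fun_cong[OF this, of "norm v"] show ?thesis using False by (simp add: w_def)
qed

lemma tangent_field_derivative: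
  assumes U: "\<And>j. extends_smoothly (\<lambda>y. U y $ j)" and tangent: "\<And>y. norm y = 1 \<Longrightarrow> y \<bullet> U y = 0"
    and x: "norm x = 1" and v: "x \<bullet> v = 0"
  shows "x \<bullet> dD U x v = - (v \<bullet> U x)"
proof -
  have "x \<in> D" using x by (simp add: D_def)
  have "((\<lambda>y. y \<bullet> U y) has_derivative (\<lambda>h. x \<bullet> dD U x h + h \<bullet> U x)) (at x within D)"
    using has_derivative_inner[OF has_derivative_ident has_derivative_dD_vec(1)[OF U \<open>x \<in> D\<close>]]
    by simp
  from has_derivative_vanishing_on_sphere[OF this _ tangent x v] show ?thesis
    by (auto simp: D_def)
qed

section \<open>Closure of the Lie algebra under its bracket\<close>

lemma linear_axis_expansion:
  assumes "linear (L :: real^'n \<Rightarrow> 'b::real_vector)"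
  shows "L v = (\<Sum>k\<in>UNIV. v $ k *\<^sub>R L (axis k 1))"
proof -
  have "L v = L (\<Sum>k\<in>UNIV. v $ k *\<^sub>R axis k 1)"
    using basis_expansion[of v] by (simp add: scalar_mult_eq_scaleR)
  then show ?thesis by (simp add: linear_sum[OF assms] linear_scale[OF assms])
qed

lemma extends_smoothly_lincomb:
  assumes "extends_smoothly f" "extends_smoothly g"
  shows "extends_smoothly (\<lambda>x. a * f x + b * g x)"
proof -
  obtain S1 g1 where 1: "open S1" "D \<subseteq> S1" "smooth_on S1 g1" "\<forall>x\<in>D. f x = g1 x"
    using assms(1) unfolding extends_smoothly_def by blast
  obtain S2 g2 where 2: "open S2" "D \<subseteq> S2" "smooth_on S2 g2" "\<forall>x\<in>D. g x = g2 x"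
    using assms(2) unfolding extends_smoothly_def by blast
  have "open (S1 \<inter> S2)" using 1 2 by auto
  moreover have "smooth_on (S1 \<inter> S2) (\<lambda>x. a * g1 x + b * g2 x)"
    using smooth_on_subset[OF 1(3)] smooth_on_subset[OF 2(3)]
    by (intro smooth_on_add smooth_on_mult smooth_on_const \<open>open (S1 \<inter> S2)\<close>) auto
  ultimately show ?thesis
    unfolding extends_smoothly_def using 1 2 by (intro exI[of _ "S1 \<inter> S2"]) auto
qed

lemma extends_smoothly_diff:
  "extends_smoothly f \<Longrightarrow> extends_smoothly g \<Longrightarrow> extends_smoothly (\<lambda>x. f x - g x)"
  using extends_smoothly_lincomb[of f g 1 "-1"] by simp

lemma smooth_D_lincomb:
  assumes "smooth_D f" "smooth_D g"
  shows "smooth_D (\<lambda>x. a * f x + b * g x)"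
  using assms extends_smoothly_lincomb unfolding smooth_D_iff by simp

lemma smooth_D_restrict:
  assumes "extends_smoothly g" "\<And>x. x \<in> D \<Longrightarrow> f x = g x" "\<And>x. x \<notin> D \<Longrightarrow> f x = 0"
  shows "smooth_D f"
proof -
  have "extends_smoothly f"
    using assms(1,2) unfolding extends_smoothly_def by auto
  with assms(3) show ?thesis unfolding smooth_D_iff by blast
qed

text \<open>In terms of smooth extensions \<open>g\<close> of \<open>f\<close> and \<open>g\<^sub>k\<close> of \<open>V\<^sub>k\<close>, the derivative along \<open>V\<close>
  is \<open>\<Sum>\<^sub>k g\<^sub>k \<partial>\<^sub>k g\<close>.\<close>

lemma extends_smoothly_dD:
  assumes f: "extends_smoothly f" and V: "\<And>k. extends_smoothly (\<lambda>y. V y $ k)"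
  shows "extends_smoothly (\<lambda>x. dD f x (V x))"
proof -
  obtain S0 g0 where g0: "open S0" "D \<subseteq> S0" "smooth_on S0 g0" "\<forall>x\<in>D. f x = g0 x"
    using f unfolding extends_smoothly_def by blast
  obtain Sk gk where gk: "\<And>k. open (Sk k)" "\<And>k. D \<subseteq> Sk k" "\<And>k. smooth_on (Sk k) (gk k)"
     "\<And>k x. x \<in> D \<Longrightarrow> V x $ k = gk k x"
    using V unfolding extends_smoothly_def by metis
  define S where "S = S0 \<inter> (\<Inter>k. Sk k)"
  have S: "open S" "D \<subseteq> S" "S \<subseteq> S0" "\<And>k. S \<subseteq> Sk k"
    unfolding S_def using g0(1,2) gk(1,2) by (auto simp: open_INT)
  define g where "g x = (\<Sum>k\<in>UNIV. gk k x * pdiff k g0 x)" for x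
  have "smooth_on S g"
    unfolding g_def
    by (intro smooth_on_sum smooth_on_mult S(1) smooth_on_subset[OF gk(3) S(4)]
        smooth_on_subset[OF smooth_on_pdiff[OF g0(3)] S(3)])
  moreover have "dD f x (V x) = g x" if x: "x \<in> D" for x
  proof -
    have "dD f x = frechet_derivative g0 (at x)"
      using dD_eq[OF x has_derivative_smooth_extension[OF g0 x]] .
    moreover have "linear (frechet_derivative g0 (at x))"
      using smooth_on_has_derivative[OF g0(3,1)] g0(2) x has_derivative_linear by blast
    ultimately have "dD f x (V x) = (\<Sum>k\<in>UNIV. V x $ k * frechet_derivative g0 (at x) (axis k 1))"
      using linear_axis_expansion[of "frechet_derivative g0 (at x)" "V x"] by simp
    also have "\<dots> = g x" unfolding g_def pdiff_def using gk(4)[OF x] by simp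
    finally show ?thesis .
  qed
  ultimately show ?thesis unfolding extends_smoothly_def using S(1,2) by blast
qed

lemma in_p_components:
  assumes "in_p (U, S, T)"
  shows "\<And>j. extends_smoothly (\<lambda>y. U y $ j)" "extends_smoothly S" "extends_smoothly T"
    and "\<And>x. norm x = 1 \<Longrightarrow> x \<bullet> U x = 0"
  using assms unfolding in_p_def smooth_D_iff by auto

lemma plin_simp:
  "plin a (U1, S1, T1) b (U2, S2, T2) =
     (\<lambda>x. a *\<^sub>R U1 x + b *\<^sub>R U2 x, \<lambda>x. a * S1 x + b * S2 x, \<lambda>x. a * T1 x + b * T2 x)"
  by (simp add: plin_def)

lemma in_p_plin:
  assumes "in_p X" "in_p Y"
  shows "in_p (plin a X b Y)"
  using assms
  by (cases X, cases Y) (auto simp: in_p_def plin_simp smooth_D_lincomb inner_add_right)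

lemma in_p_pbr:
  assumes X: "in_p (U1, S1, T1)" and Y: "in_p (U2, S2, T2)"
  shows "in_p (pbr (U1, S1, T1) (U2, S2, T2))"
proof -
  note A = in_p_components[OF X] and B = in_p_components[OF Y]
  have "smooth_D (\<lambda>x. (if x \<in> D then - vbr U1 U2 x else 0) $ j)" for j
    by (rule smooth_D_restrict[OF extends_smoothly_diff[OF
          extends_smoothly_dD[OF A(1) B(1)] extends_smoothly_dD[OF B(1) A(1)]]])
      (auto simp: vbr_def has_derivative_dD_vec(2)[OF A(1)] has_derivative_dD_vec(2)[OF B(1)])
  moreover have "smooth_D (\<lambda>x. if x \<in> D then - (lieD U1 S2 x - lieD U2 S1 x) else 0)"
    by (rule smooth_D_restrict[OF extends_smoothly_diff[OF
          extends_smoothly_dD[OF A(2) B(1)] extends_smoothly_dD[OF B(2) A(1)]]])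
      (auto simp: lieD_def)
  moreover have "smooth_D (\<lambda>x. if x \<in> D then - (lieD U1 T2 x - lieD U2 T1 x) else 0)"
    by (rule smooth_D_restrict[OF extends_smoothly_diff[OF
          extends_smoothly_dD[OF A(3) B(1)] extends_smoothly_dD[OF B(3) A(1)]]])
      (auto simp: lieD_def)
  moreover have "x \<bullet> vbr U1 U2 x = 0" if "norm x = 1" for x
    using tangent_field_derivative[OF B(1,4) that A(4)[OF that]]
      tangent_field_derivative[OF A(1,4) that B(4)[OF that]]
    by (simp add: vbr_def inner_diff_right inner_commute)
  ultimately show ?thesis
    unfolding in_p_def pbr_def by (auto simp: D_def)
qed

section \<open>A chain rule for functional derivatives\<close>

lemma at_within_null_sequence_eq_bot:
  fixes t :: "nat \<Rightarrow> real"
  assumes pos: "\<And>n. t n > 0" and lim: "t \<longlonglongrightarrow> 0"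
  shows "at (t n) within insert 0 (range t) = bot"
proof -
  obtain N where N: "\<And>m. m \<ge> N \<Longrightarrow> t m < t n / 2"
    using order_tendstoD(2)[OF lim, of "t n / 2"] pos[of n] by (auto simp: eventually_sequentially)
  have "insert 0 (range t) \<inter> ball (t n) (t n / 2) \<subseteq> t ` {..<N}"
  proof
    fix y assume y: "y \<in> insert 0 (range t) \<inter> ball (t n) (t n / 2)"
    then have "\<bar>t n - y\<bar> < t n / 2" by (simp add: dist_real_def)
    then have "y > t n / 2" by linarith
    moreover obtain m where "y = t m" using y \<open>y > t n / 2\<close> pos[of n] by auto
    ultimately have "\<not> N \<le> m" using N by force
    then show "y \<in> t ` {..<N}" using \<open>y = t m\<close> by simp
  qed
  then have "\<not> t n islimpt insert 0 (range t)"
    unfolding islimpt_eq_infinite_ball using pos[of n]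
    by (metis finite_imageI finite_lessThan finite_subset half_gt_zero)
  then show ?thesis using trivial_limit_within by blast
qed

lemma tendsto_within_null_sequence:
  fixes t :: "nat \<Rightarrow> real" and g :: "real \<Rightarrow> 'b::topological_space"
  assumes pos: "\<And>n. t n > 0" and lim: "(\<lambda>n. g (t n)) \<longlonglongrightarrow> l"
  shows "(g \<longlongrightarrow> l) (at 0 within insert 0 (range t))"
proof (rule topological_tendstoI)
  fix U assume "open U" "l \<in> U"
  define K where "K = {n. g (t n) \<notin> U}"
  have "finite K"
    using topological_tendstoD[OF lim \<open>open U\<close> \<open>l \<in> U\<close>]
    by (simp add: K_def cofinite_eq_sequentially[symmetric] eventually_cofinite)
  define \<delta> where "\<delta> = Min (insert 1 (t ` K))"
  have fin: "finite (insert 1 (t ` K))" using \<open>finite K\<close> by simp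
  have "\<delta> > 0" using fin pos unfolding \<delta>_def by (subst Min_gr_iff) auto
  have "g (t n) \<in> U" if "t n < \<delta>" for n
  proof (rule ccontr)
    assume "g (t n) \<notin> U"
    then have "\<delta> \<le> t n" unfolding \<delta>_def using fin by (intro Min_le) (auto simp: K_def)
    with that show False by simp
  qed
  then show "eventually (\<lambda>\<tau>. g \<tau> \<in> U) (at 0 within insert 0 (range t))"
    unfolding eventually_at using \<open>\<delta> > 0\<close> pos
    by (intro exI[of _ \<delta>]) (auto simp: dist_real_def)
qed

lemma null_sequence_inj_subseq:
  fixes t :: "nat \<Rightarrow> real"
  assumes pos: "\<And>n. t n > 0" and lim: "t \<longlonglongrightarrow> 0"
  obtains r :: "nat \<Rightarrow> nat" where "strict_mono r" "inj (t \<circ> r)"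
proof -
  have "\<exists>m. t m < t k \<and> k < m" for k
  proof -
    have "eventually (\<lambda>m. t m < t k \<and> k < m) sequentially"
      using order_tendstoD(2)[OF lim pos[of k]] eventually_gt_at_top by (rule eventually_conj)
    then show ?thesis using eventually_False_sequentially eventually_mono by blast
  qed
  then obtain r where r: "\<And>n. t (r (Suc n)) < t (r n) \<and> r n < r (Suc n)"
    using dependent_nat_choice[of "\<lambda>_ _. True" "\<lambda>_ k m. t m < t k \<and> k < m"] by blast
  then have "strict_mono r" "strict_mono (\<lambda>n. - t (r n))"
    by (auto simp: strict_mono_Suc_iff)
  moreover from this(2) have "inj (t \<circ> r)"
    by (metis (mono_tags, lifting) comp_apply injD injI strict_mono_imp_inj_on)
  ultimately show ?thesis using that by blast
qed

lemma directions_convergent_subseq: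
  fixes y :: "nat \<Rightarrow> 'a::euclidean_space"
  assumes "\<And>n. y n \<noteq> x" "y \<longlonglongrightarrow> x"
  obtains r :: "nat \<Rightarrow> nat" and u where "strict_mono r" "inj (\<lambda>n. norm (y (r n) - x))"
    "(\<lambda>n. (y (r n) - x) /\<^sub>R norm (y (r n) - x)) \<longlonglongrightarrow> u"
proof -
  have "\<forall>n. (y n - x) /\<^sub>R norm (y n - x) \<in> sphere 0 1" using assms(1) by simp
  obtain u r1 where r1: "strict_mono r1"
    "((\<lambda>n. (y n - x) /\<^sub>R norm (y n - x)) \<circ> r1) \<longlonglongrightarrow> u"
    using seq_compactE[OF compact_imp_seq_compact[OF compact_sphere] \<open>\<forall>n. _ \<in> sphere 0 1\<close>] by blast
  define t where "t = (\<lambda>n. norm (y (r1 n) - x))"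
  have "t n > 0" for n using assms(1) by (simp add: t_def)
  moreover have "t \<longlonglongrightarrow> 0"
    using LIMSEQ_subseq_LIMSEQ[OF assms(2) r1(1)]
    by (simp add: t_def comp_def LIM_zero tendsto_norm_zero)
  ultimately obtain r2 :: "nat \<Rightarrow> nat" where r2: "strict_mono r2" "inj (t \<circ> r2)"
    by (rule null_sequence_inj_subseq)
  show ?thesis
  proof (rule that[of "r1 \<circ> r2" u])
    show "strict_mono (r1 \<circ> r2)" using r1(1) r2(1) by (rule strict_mono_o)
    show "inj (\<lambda>n. norm (y ((r1 \<circ> r2) n) - x))" using r2(2) by (simp add: t_def comp_def)
    show "(\<lambda>n. (y ((r1 \<circ> r2) n) - x) /\<^sub>R norm (y ((r1 \<circ> r2) n) - x)) \<longlonglongrightarrow> u"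
      using LIMSEQ_subseq_LIMSEQ[OF r1(2) r2(1)] by (simp add: comp_def)
  qed
qed

lemma difference_quotient_split:
  fixes L :: "'a::real_normed_vector \<Rightarrow> 'b::real_normed_vector"
  assumes "linear L"
  shows "(f y - f x) /\<^sub>R norm (y - x)
    = (1 / norm (y - x)) *\<^sub>R (f y - (f x + L (y - x))) + L ((y - x) /\<^sub>R norm (y - x))"
proof -
  have "L ((y - x) /\<^sub>R norm (y - x)) = (1 / norm (y - x)) *\<^sub>R L (y - x)"
    using linear_scale[OF assms] by (simp add: divide_inverse)
  show ?thesis unfolding \<open>L _ = _\<close> by (simp add: algebra_simps divide_inverse)
qed

lemma has_derivative_difference_quotients:
  fixes f :: "'a::real_normed_vector \<Rightarrow> 'b::real_normed_vector"
  assumes f: "(f has_derivative f') (at x within T)"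
    and y: "\<And>n. y n \<in> T - {x}" "y \<longlonglongrightarrow> x" "(\<lambda>n. (y n - x) /\<^sub>R norm (y n - x)) \<longlonglongrightarrow> u"
  shows "(\<lambda>n. (f (y n) - f x) /\<^sub>R norm (y n - x)) \<longlonglongrightarrow> f' u"
proof -
  have "filterlim y (at x within T) sequentially"
    using y(1,2) unfolding filterlim_at by (auto intro!: always_eventually)
  moreover have "((\<lambda>z. (1 / norm (z - x)) *\<^sub>R (f z - (f x + f' (z - x)))) \<longlongrightarrow> 0) (at x within T)"
    using f unfolding has_derivative_within by blast
  ultimately have "(\<lambda>n. (1 / norm (y n - x)) *\<^sub>R (f (y n) - (f x + f' (y n - x)))) \<longlonglongrightarrow> 0"
    by (rule filterlim_compose[rotated])
  moreover have "(\<lambda>n. f' ((y n - x) /\<^sub>R norm (y n - x))) \<longlonglongrightarrow> f' u"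
    using has_derivative_bounded_linear[OF f] y(3) by (rule bounded_linear.tendsto)
  ultimately show ?thesis
    using tendsto_add difference_quotient_split[OF has_derivative_linear[OF f]] by fastforce
qed

text \<open>Compactness of the unit sphere lets a bad sequence be thinned out to one with converging
  directions and pairwise distinct distances to the base point.\<close>

lemma has_derivative_within_by_difference_quotients:
  fixes f :: "'a::euclidean_space \<Rightarrow> 'b::real_normed_vector"
  assumes L: "bounded_linear L"
    and quotients: "\<And>y u. (\<And>n. y n \<in> T - {x}) \<Longrightarrow> y \<longlonglongrightarrow> x \<Longrightarrow> inj (\<lambda>n. norm (y n - x)) \<Longrightarrow>
      (\<lambda>n. (y n - x) /\<^sub>R norm (y n - x)) \<longlonglongrightarrow> u \<Longrightarrow>
      (\<lambda>n. (f (y n) - f x) /\<^sub>R norm (y n - x)) \<longlonglongrightarrow> L u"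
  shows "(f has_derivative L) (at x within T)"
  unfolding has_derivative_within tendsto_at_iff_sequentially
proof (intro conjI L allI impI)
  let ?R = "\<lambda>z. (1 / norm (z - x)) *\<^sub>R (f z - (f x + L (z - x)))"
  fix y assume y: "\<forall>n. y n \<in> T - {x}" "y \<longlonglongrightarrow> x"
  show "(?R \<circ> y) \<longlonglongrightarrow> 0"
  proof (rule ccontr)
    assume "\<not> (?R \<circ> y) \<longlonglongrightarrow> 0"
    then obtain e where "e > 0" and far: "\<not> eventually (\<lambda>n. norm (?R (y n)) < e) sequentially"
      unfolding tendsto_iff by (auto simp: dist_norm)
    obtain r1 :: "nat \<Rightarrow> nat" where r1: "strict_mono r1" "\<And>n. norm (?R (y (r1 n))) \<ge> e"
      using not_eventually_sequentiallyD[OF far] by (auto simp: not_less)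
    have y1: "\<And>n. y (r1 n) \<in> T - {x}" "(\<lambda>n. y (r1 n)) \<longlonglongrightarrow> x"
      using y LIMSEQ_subseq_LIMSEQ[OF y(2) r1(1)] by (auto simp: comp_def)
    then obtain r2 u where r2: "strict_mono r2" "inj (\<lambda>n. norm (y (r1 (r2 n)) - x))"
      "(\<lambda>n. (y (r1 (r2 n)) - x) /\<^sub>R norm (y (r1 (r2 n)) - x)) \<longlonglongrightarrow> u"
      using directions_convergent_subseq[of "\<lambda>n. y (r1 n)" x] by blast
    define z where "z = (\<lambda>n. y (r1 (r2 n)))"
    have z: "\<And>n. z n \<in> T - {x}" "z \<longlonglongrightarrow> x" "inj (\<lambda>n. norm (z n - x))"
      "(\<lambda>n. (z n - x) /\<^sub>R norm (z n - x)) \<longlonglongrightarrow> u"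
      using y1 LIMSEQ_subseq_LIMSEQ[OF y1(2) r2(1)] r2(2,3) by (auto simp: z_def comp_def)
    have "(\<lambda>n. (f (z n) - f x) /\<^sub>R norm (z n - x) - L ((z n - x) /\<^sub>R norm (z n - x)))
        \<longlonglongrightarrow> L u - L u"
      using quotients[OF z] bounded_linear.tendsto[OF L z(4)] by (rule tendsto_diff)
    then have "(\<lambda>n. ?R (z n)) \<longlonglongrightarrow> 0"
      using difference_quotient_split[OF bounded_linear.linear[OF L]] by simp
    then have "eventually (\<lambda>n. norm (?R (z n)) < e) sequentially"
      using \<open>e > 0\<close> unfolding tendsto_iff by (auto simp: dist_norm)
    then obtain n where "norm (?R (z n)) < e"
      using eventually_happens'[OF sequentially_bot] by blast
    with r1(2) show False by (simp add: z_def not_le[symmetric])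
  qed
qed

lemma in_pstar_zero: "in_pstar (\<lambda>X. 0)"
  unfolding in_pstar_def by simp

text \<open>The functional derivative only controls derivatives along curves. A test sequence
  \<open>y\<^sub>n \<rightarrow> x\<close> is turned into a curve on the parameter set \<open>{0} \<union> {t\<^sub>n}\<close>, where
  \<open>t\<^sub>n = \<parallel>y\<^sub>n - x\<parallel>\<close>: the points \<open>t\<^sub>n\<close> are isolated, so the curve only needs a derivative at \<open>0\<close>.\<close>

lemma wcurve_through_sequence:
  fixes \<Phi> \<Phi>' :: "pt \<Rightarrow> pstar"
  assumes \<Phi>: "\<And>v. in_pstar (\<Phi> v)" "\<And>w. in_pstar (\<Phi>' w)"
    and d\<Phi>: "\<And>X. in_p X \<Longrightarrow> ((\<lambda>v. \<Phi> v X) has_derivative (\<lambda>w. \<Phi>' w X)) (at x within T)"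
    and y: "\<And>n. y n \<in> T - {x}" "y \<longlonglongrightarrow> x" "inj (\<lambda>n. norm (y n - x))"
      "(\<lambda>n. (y n - x) /\<^sub>R norm (y n - x)) \<longlonglongrightarrow> u"
  defines "t \<equiv> \<lambda>n. norm (y n - x)"
  obtains c c' where "wcurve (insert 0 (range t)) c c'"
    and "\<And>n. c (t n) = \<Phi> (y n)" "c 0 = \<Phi> x" "c' 0 = \<Phi>' u"
proof -
  have t: "\<And>n. t n > 0" "t \<longlonglongrightarrow> 0" "inj t"
    using y(1,3) tendsto_norm_zero[OF LIM_zero[OF y(2)]] by (auto simp: t_def)
  define I where "I = insert 0 (range t)"
  define c where "c \<tau> = \<Phi> (if \<tau> \<in> range t then y (inv t \<tau>) else x)" for \<tau>
  define c' where "c' \<tau> = (if \<tau> = 0 then \<Phi>' u else (\<lambda>X. 0))" for \<tau> :: real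
  have c: "c (t n) = \<Phi> (y n)" "c 0 = \<Phi> x" for n
    using t(1,3) unfolding c_def by (auto simp: t(1)[THEN less_imp_neq, symmetric])
  have "wcurve I c c'"
    unfolding wcurve_def
  proof (intro conjI ballI allI impI)
    fix \<mu> X assume "\<mu> \<in> I" "in_p X"
    show "((\<lambda>\<nu>. c \<nu> X) has_real_derivative c' \<mu> X) (at \<mu> within I)"
    proof (cases "\<mu> = 0")
      case True
      have "(\<lambda>n. (\<Phi> (y n) X - \<Phi> x X) / t n) \<longlonglongrightarrow> \<Phi>' u X"
        using has_derivative_difference_quotients[OF d\<Phi>[OF \<open>in_p X\<close>] y(1,2,4)]
        by (simp add: t_def divide_inverse mult.commute)
      then have "((\<lambda>\<nu>. (c \<nu> X - c 0 X) / (\<nu> - 0)) \<longlongrightarrow> \<Phi>' u X) (at 0 within I)"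
        unfolding I_def by (intro tendsto_within_null_sequence) (simp_all add: c t(1))
      then show ?thesis using True by (simp add: has_field_derivative_iff c'_def)
    next
      case False
      with \<open>\<mu> \<in> I\<close> obtain n where "\<mu> = t n" by (auto simp: I_def)
      then show ?thesis using at_within_null_sequence_eq_bot[OF t(1,2)] by (simp add: I_def)
    qed
  qed (auto simp: c_def c'_def \<Phi> in_pstar_zero)
  with c show ?thesis using that by (simp add: I_def c'_def)
qed

lemma has_fderiv_difference_quotients:
  fixes \<Phi> \<Phi>' :: "pt \<Rightarrow> pstar"
  assumes F: "has_fderiv F dF"
    and \<Phi>: "\<And>v. in_pstar (\<Phi> v)" "\<And>w. in_pstar (\<Phi>' w)"
    and d\<Phi>: "\<And>X. in_p X \<Longrightarrow> ((\<lambda>v. \<Phi> v X) has_derivative (\<lambda>w. \<Phi>' w X)) (at x within T)"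
    and y: "\<And>n. y n \<in> T - {x}" "y \<longlonglongrightarrow> x" "inj (\<lambda>n. norm (y n - x))"
      "(\<lambda>n. (y n - x) /\<^sub>R norm (y n - x)) \<longlonglongrightarrow> u"
  shows "(\<lambda>n. (F (\<Phi> (y n)) - F (\<Phi> x)) / norm (y n - x)) \<longlonglongrightarrow> \<Phi>' u (dF (\<Phi> x))"
proof -
  define t where "t = (\<lambda>n. norm (y n - x))"
  obtain c c' where c: "wcurve (insert 0 (range t)) c c'"
    "\<And>n. c (t n) = \<Phi> (y n)" "c 0 = \<Phi> x" "c' 0 = \<Phi>' u"
    using wcurve_through_sequence[OF \<Phi> d\<Phi> y] unfolding t_def by blast
  have "((\<lambda>\<nu>. F (c \<nu>)) has_real_derivative c' 0 (dF (c 0))) (at 0 within insert 0 (range t))"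
    using F c(1) unfolding has_fderiv_def by blast
  then have "((\<lambda>\<nu>. (F (c \<nu>) - F (c 0)) / (\<nu> - 0)) \<longlongrightarrow> \<Phi>' u (dF (\<Phi> x)))
      (at 0 within insert 0 (range t))"
    by (simp add: has_field_derivative_iff c(3,4))
  moreover have "filterlim t (at 0 within insert 0 (range t)) sequentially"
    using y(1) tendsto_norm_zero[OF LIM_zero[OF y(2)]] unfolding filterlim_at t_def
    by (auto intro!: always_eventually)
  ultimately have "(\<lambda>n. (F (c (t n)) - F (c 0)) / (t n - 0)) \<longlonglongrightarrow> \<Phi>' u (dF (\<Phi> x))"
    by (rule filterlim_compose)
  then show ?thesis by (simp only: c(2,3)) (simp add: t_def)
qed

lemma has_fderiv_chain:
  fixes \<Phi> \<Phi>' :: "pt \<Rightarrow> pstar"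
  assumes F: "has_fderiv F dF"
    and \<Phi>: "\<And>v. in_pstar (\<Phi> v)" "\<And>w. in_pstar (\<Phi>' w)"
    and d\<Phi>: "\<And>X. in_p X \<Longrightarrow> ((\<lambda>v. \<Phi> v X) has_derivative (\<lambda>w. \<Phi>' w X)) (at x within T)"
  shows "((\<lambda>v. F (\<Phi> v)) has_derivative (\<lambda>w. \<Phi>' w (dF (\<Phi> x)))) (at x within T)"
proof (rule has_derivative_within_by_difference_quotients)
  have "in_p (dF (\<Phi> x))" using F \<Phi>(1) unfolding has_fderiv_def by blast
  from has_derivative_bounded_linear[OF d\<Phi>[OF this]]
  show "bounded_linear (\<lambda>w. \<Phi>' w (dF (\<Phi> x)))" .
next
  fix y :: "nat \<Rightarrow> pt" and u
  assume "\<And>n. y n \<in> T - {x}" "y \<longlonglongrightarrow> x" "inj (\<lambda>n. norm (y n - x))"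
    "(\<lambda>n. (y n - x) /\<^sub>R norm (y n - x)) \<longlonglongrightarrow> u"
  from has_fderiv_difference_quotients[OF F \<Phi> d\<Phi> this]
  show "(\<lambda>n. (F (\<Phi> (y n)) - F (\<Phi> x)) /\<^sub>R norm (y n - x)) \<longlonglongrightarrow> \<Phi>' u (dF (\<Phi> x))"
    by (simp add: divide_inverse mult.commute)
qed

section \<open>Derivatives of the particle map \<open>\<Gamma>\<close>\<close>

lemma in_pstar_restrict:
  assumes "\<And>X Y a b. in_p X \<Longrightarrow> in_p Y \<Longrightarrow> \<phi> (plin a X b Y) = a * \<phi> X + b * \<phi> Y"
  shows "in_pstar (\<lambda>X. if in_p X then \<phi> X else 0)"
  unfolding in_pstar_def using assms in_p_plin by simp

lemma Gamma_in_pstar: "in_pstar (Gamma N WS WT q p s t)"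
  unfolding Gamma_def
  by (rule in_pstar_restrict, clarsimp simp: plin_simp)
    (simp add: sum_distrib_left sum.distrib[symmetric] algebra_simps)

text \<open>Derivatives of one summand of \<open>\<Gamma>\<close> in the position \<open>q\<close> and the momentum \<open>p\<close> of its particle;
  \<open>\<sigma>\<close> and \<open>\<tau>\<close> stand for \<open>W\<^sub>S S\<^sub>0\<close> and \<open>W\<^sub>T T\<^sub>0\<close>.\<close>

definition Gamma_dq :: "pt \<Rightarrow> pt \<Rightarrow> real \<Rightarrow> real \<Rightarrow> pt \<Rightarrow> pstar" where
  "Gamma_dq q p \<sigma> \<tau> w X = (if in_p X then (case X of (U, S, T) \<Rightarrow>
      p \<bullet> dD U q w + \<sigma> * dD S q w + \<tau> * dD T q w) else 0)"

definition Gamma_dp :: "pt \<Rightarrow> pt \<Rightarrow> pstar" where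
  "Gamma_dp q w X = (if in_p X then (case X of (U, S, T) \<Rightarrow> w \<bullet> U q) else 0)"

lemma dD_lincomb:
  fixes f g :: "pt \<Rightarrow> 'b::real_normed_vector"
  assumes "x \<in> D" "(f has_derivative dD f x) (at x within D)" "(g has_derivative dD g x) (at x within D)"
  shows "dD (\<lambda>y. a *\<^sub>R f y + b *\<^sub>R g y) x w = a *\<^sub>R dD f x w + b *\<^sub>R dD g x w"
proof -
  have "((\<lambda>y. a *\<^sub>R f y + b *\<^sub>R g y) has_derivative (\<lambda>w. a *\<^sub>R dD f x w + b *\<^sub>R dD g x w))
      (at x within D)"
    using assms(2,3) by (auto intro!: derivative_eq_intros)
  from dD_eq[OF assms(1) this] show ?thesis by simp
qed

lemma Gamma_dq_in_pstar:
  assumes "q \<in> D"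
  shows "in_pstar (Gamma_dq q p \<sigma> \<tau> w)"
  unfolding Gamma_dq_def[abs_def]
proof (rule in_pstar_restrict, clarsimp simp: plin_simp)
  fix U1 S1 T1 U2 S2 T2 and a b :: real
  assume X: "in_p (U1, S1, T1)" and Y: "in_p (U2, S2, T2)"
  note A = in_p_components[OF X] and B = in_p_components[OF Y]
  have "dD (\<lambda>y. a *\<^sub>R U1 y + b *\<^sub>R U2 y) q w = a *\<^sub>R dD U1 q w + b *\<^sub>R dD U2 q w"
    using has_derivative_dD_vec(1)[OF A(1) assms] has_derivative_dD_vec(1)[OF B(1) assms]
    by (rule dD_lincomb[OF assms])
  moreover have "dD (\<lambda>y. a * S1 y + b * S2 y) q w = a * dD S1 q w + b * dD S2 q w"
    using dD_lincomb[OF assms has_derivative_dD[OF A(2) assms] has_derivative_dD[OF B(2) assms]]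
    by simp
  moreover have "dD (\<lambda>y. a * T1 y + b * T2 y) q w = a * dD T1 q w + b * dD T2 q w"
    using dD_lincomb[OF assms has_derivative_dD[OF A(3) assms] has_derivative_dD[OF B(3) assms]]
    by simp
  ultimately show "p \<bullet> dD (\<lambda>y. a *\<^sub>R U1 y + b *\<^sub>R U2 y) q w
        + \<sigma> * dD (\<lambda>y. a * S1 y + b * S2 y) q w + \<tau> * dD (\<lambda>y. a * T1 y + b * T2 y) q w
      = a * (p \<bullet> dD U1 q w + \<sigma> * dD S1 q w + \<tau> * dD T1 q w)
        + b * (p \<bullet> dD U2 q w + \<sigma> * dD S2 q w + \<tau> * dD T2 q w)"
    by (simp add: algebra_simps)
qed

lemma Gamma_dp_in_pstar: "in_pstar (Gamma_dp q w)"
  unfolding Gamma_dp_def[abs_def]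
  by (rule in_pstar_restrict, clarsimp simp: plin_simp) (simp add: inner_add_right)

lemma Gamma_apply_has_derivative_q:
  assumes "i < N" "q i \<in> D" "in_p X"
  shows "((\<lambda>v. Gamma N WS WT (q(i := v)) p s t X) has_derivative
      (\<lambda>w. Gamma_dq (q i) (p i) (WS * s i) (WT * t i) w X)) (at (q i) within D)"
proof -
  obtain U S T where X: "X = (U, S, T)" by (cases X)
  note A = in_p_components[OF assms(3)[unfolded X]]
  define summand where "summand k = (\<lambda>v. p k \<bullet> U ((q(i := v)) k) + WS * s k * S ((q(i := v)) k)
    + WT * t k * T ((q(i := v)) k))" for k
  have "(summand k has_derivative (\<lambda>w. if k = i then Gamma_dq (q i) (p i) (WS * s i) (WT * t i) w X
      else 0)) (at (q i) within D)" for k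
    using has_derivative_dD_vec(1)[OF A(1) assms(2)] has_derivative_dD[OF A(2) assms(2)]
      has_derivative_dD[OF A(3) assms(2)] assms(3)
    by (cases "k = i") (auto simp: summand_def Gamma_dq_def X intro!: derivative_eq_intros)
  then have "((\<lambda>v. \<Sum>k<N. summand k v) has_derivative
      (\<lambda>w. \<Sum>k<N. if k = i then Gamma_dq (q i) (p i) (WS * s i) (WT * t i) w X else 0))
      (at (q i) within D)"
    by (rule has_derivative_sum)
  moreover have "Gamma N WS WT (q(i := v)) p s t X = (\<Sum>k<N. summand k v)" for v
    using assms(3) by (simp add: Gamma_def X summand_def)
  ultimately show ?thesis using assms(1) by simp
qed

lemma Gamma_apply_has_derivative_p:
  assumes "i < N" "in_p X"
  shows "((\<lambda>v. Gamma N WS WT q (p(i := v)) s t X) has_derivative (\<lambda>w. Gamma_dp (q i) w X)) (at (p i))"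
proof -
  obtain U S T where X: "X = (U, S, T)" by (cases X)
  define summand where
    "summand k = (\<lambda>v. (p(i := v)) k \<bullet> U (q k) + WS * s k * S (q k) + WT * t k * T (q k))" for k
  have "(summand k has_derivative (\<lambda>w. if k = i then Gamma_dp (q i) w X else 0)) (at (p i))" for k
    using assms(2) by (cases "k = i") (auto simp: summand_def Gamma_dp_def X intro!: derivative_eq_intros)
  then have "((\<lambda>v. \<Sum>k<N. summand k v) has_derivative
      (\<lambda>w. \<Sum>k<N. if k = i then Gamma_dp (q i) w X else 0)) (at (p i))"
    by (rule has_derivative_sum)
  moreover have "Gamma N WS WT q (p(i := v)) s t X = (\<Sum>k<N. summand k v)" for v
    using assms(2) by (simp add: Gamma_def X summand_def)
  ultimately show ?thesis using assms(1) by simp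
qed

lemma has_derivative_comp_Gamma_q:
  assumes "has_fderiv H dH" "i < N" "q i \<in> D"
  shows "((\<lambda>v. H (Gamma N WS WT (q(i := v)) p s t)) has_derivative
    (\<lambda>w. Gamma_dq (q i) (p i) (WS * s i) (WT * t i) w (dH (Gamma N WS WT q p s t)))) (at (q i) within D)"
proof -
  have "((\<lambda>v. H (Gamma N WS WT (q(i := v)) p s t)) has_derivative
    (\<lambda>w. Gamma_dq (q i) (p i) (WS * s i) (WT * t i) w (dH (Gamma N WS WT (q(i := q i)) p s t))))
    (at (q i) within D)"
    by (rule has_fderiv_chain[OF assms(1) Gamma_in_pstar Gamma_dq_in_pstar[OF assms(3)]
          Gamma_apply_has_derivative_q[where q=q and i=i, OF assms(2,3)]])
  then show ?thesis by simp
qed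

lemma has_derivative_comp_Gamma_p:
  assumes "has_fderiv H dH" "i < N"
  shows "((\<lambda>v. H (Gamma N WS WT q (p(i := v)) s t)) has_derivative
    (\<lambda>w. Gamma_dp (q i) w (dH (Gamma N WS WT q p s t)))) (at (p i))"
proof -
  have "((\<lambda>v. H (Gamma N WS WT q (p(i := v)) s t)) has_derivative
    (\<lambda>w. Gamma_dp (q i) w (dH (Gamma N WS WT q (p(i := p i)) s t)))) (at (p i))"
    by (rule has_fderiv_chain[OF assms(1) Gamma_in_pstar Gamma_dp_in_pstar
          Gamma_apply_has_derivative_p[where p=p and i=i, OF assms(2)]])
  then show ?thesis by simp
qed

lemma phase_diff_Gamma:
  assumes "has_fderiv H dH" "\<forall>i<N. q i \<in> D"
  shows "phase_diff N (\<lambda>q p s t. H (Gamma N WS WT q p s t)) q p s t"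
  unfolding phase_diff_def
  using differentiableI[OF has_derivative_comp_Gamma_q[OF assms(1)]]
    differentiableI[OF has_derivative_comp_Gamma_p[OF assms(1)]] assms(2)
  by blast

lemma vec_lambda_axis_inner:
  assumes "linear (L :: real^'n \<Rightarrow> real)"
  shows "(\<chi> j. L (axis j 1)) \<bullet> v = L v"
  unfolding linear_axis_expansion[OF assms, of v] inner_vec_def by (simp add: mult.commute)

lemma grad_q_Gamma:
  assumes "has_fderiv H dH" "i < N" "q i \<in> D"
  shows "grad_q (\<lambda>q p s t. H (Gamma N WS WT q p s t)) i q p s t \<bullet> v
    = Gamma_dq (q i) (p i) (WS * s i) (WT * t i) v (dH (Gamma N WS WT q p s t))"
proof -
  note d = has_derivative_comp_Gamma_q
    [where q=q and i=i and p=p and s=s and t=t and WS=WS and WT=WT, OF assms]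
  show ?thesis unfolding grad_q_def frechet_derivative_within_D[OF assms(3) d]
    by (rule vec_lambda_axis_inner[OF has_derivative_linear[OF d]])
qed

lemma grad_p_Gamma:
  assumes "has_fderiv H dH" "i < N"
  shows "grad_p (\<lambda>q p s t. H (Gamma N WS WT q p s t)) i q p s t = fst (dH (Gamma N WS WT q p s t)) (q i)"
proof -
  have "in_p (dH (Gamma N WS WT q p s t))"
    using assms(1) Gamma_in_pstar unfolding has_fderiv_def by blast
  then show ?thesis
    unfolding grad_p_def frechet_derivative_at[OF has_derivative_comp_Gamma_p[OF assms], symmetric]
    by (auto simp: Gamma_dp_def vec_eq_iff inner_axis' split: prod.split)
qed

lemma phase_br_Gamma:
  fixes N :: nat and WS WT :: real and q p :: "nat \<Rightarrow> pt" and s t :: "nat \<Rightarrow> real"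
  assumes "has_fderiv F dF" "has_fderiv G dG" "\<forall>i<N. q i \<in> D"
  defines "X\<^sub>0 \<equiv> Gamma N WS WT q p s t"
  shows "phase_br N (\<lambda>q p s t. F (Gamma N WS WT q p s t)) (\<lambda>q p s t. G (Gamma N WS WT q p s t)) q p s t
    = (\<Sum>i<N. Gamma_dq (q i) (p i) (WS * s i) (WT * t i) (fst (dG X\<^sub>0) (q i)) (dF X\<^sub>0)
              - Gamma_dq (q i) (p i) (WS * s i) (WT * t i) (fst (dF X\<^sub>0) (q i)) (dG X\<^sub>0))"
  unfolding phase_br_def X\<^sub>0_def
  by (rule sum.cong) (simp_all add: assms(3) grad_q_Gamma[OF assms(1)] grad_q_Gamma[OF assms(2)]
      grad_p_Gamma[OF assms(1)] grad_p_Gamma[OF assms(2)])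

lemma Gamma_pbr:
  assumes "in_p X" "in_p Y" "\<forall>i<N. q i \<in> D"
  shows "Gamma N WS WT q p s t (pbr X Y)
    = (\<Sum>i<N. Gamma_dq (q i) (p i) (WS * s i) (WT * t i) (fst Y (q i)) X
              - Gamma_dq (q i) (p i) (WS * s i) (WT * t i) (fst X (q i)) Y)"
proof -
  obtain U1 S1 T1 U2 S2 T2 where XY: "X = (U1, S1, T1)" "Y = (U2, S2, T2)"
    by (cases X, cases Y)
  show ?thesis
    using assms in_p_pbr[OF assms(1,2)[unfolded XY]] unfolding XY Gamma_def
    by (auto intro!: sum.cong simp: pbr_def Gamma_dq_def vbr_def lieD_def algebra_simps)
qed

theorem theorem5:
  fixes N :: nat and WS WT :: real
    and F G :: "pstar \<Rightarrow> real" and dF dG :: "pstar \<Rightarrow> pelem"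
    and q p :: "nat \<Rightarrow> real^2" and s t :: "nat \<Rightarrow> real"
  assumes "0 < N" and "WS \<noteq> 0" and "WT \<noteq> 0"
    and "has_fderiv F dF" and "has_fderiv G dG"
    and "\<forall>i<N. q i \<in> D"
  shows "in_pstar (Gamma N WS WT q p s t)
    \<and> phase_diff N (\<lambda>q p s t. F (Gamma N WS WT q p s t)) q p s t
    \<and> phase_diff N (\<lambda>q p s t. G (Gamma N WS WT q p s t)) q p s t
    \<and> phase_br N (\<lambda>q p s t. F (Gamma N WS WT q p s t)) (\<lambda>q p s t. G (Gamma N WS WT q p s t)) q p s t
      = lp_br dF dG (Gamma N WS WT q p s t)"
proof -
  note F = assms(4) and G = assms(5) and qD = assms(6)
  define X\<^sub>0 where "X\<^sub>0 = Gamma N WS WT q p s t"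
  have "in_p (dF X\<^sub>0)" "in_p (dG X\<^sub>0)"
    using F G Gamma_in_pstar unfolding has_fderiv_def X\<^sub>0_def by blast+
  have "phase_br N (\<lambda>q p s t. F (Gamma N WS WT q p s t)) (\<lambda>q p s t. G (Gamma N WS WT q p s t)) q p s t
      = (\<Sum>i<N. Gamma_dq (q i) (p i) (WS * s i) (WT * t i) (fst (dG X\<^sub>0) (q i)) (dF X\<^sub>0)
              - Gamma_dq (q i) (p i) (WS * s i) (WT * t i) (fst (dF X\<^sub>0) (q i)) (dG X\<^sub>0))"
    unfolding X\<^sub>0_def by (rule phase_br_Gamma[OF F G qD])
  also have "\<dots> = X\<^sub>0 (pbr (dF X\<^sub>0) (dG X\<^sub>0))"
    using Gamma_pbr[where p=p and s=s and t=t and WS=WS and WT=WT,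
        OF \<open>in_p (dF X\<^sub>0)\<close> \<open>in_p (dG X\<^sub>0)\<close> qD]
    by (simp add: X\<^sub>0_def)
  finally show ?thesis
    using Gamma_in_pstar phase_diff_Gamma[OF F qD] phase_diff_Gamma[OF G qD]
    by (simp add: lp_br_def X\<^sub>0_def)
qed

end
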